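(* There do not exist orthogonal quantum Latin squares $\Psi=(\psi_{ij})$ and $\Phi$ of order $6$ such that $\Psi$ is classical with underlying Latin square $L$ (i.e. there are an orthonormal basis $e_1,\dots,e_6$ of $\mathbb C^6$ and a Latin square $L=(L_{ij})$ of order $6$ on $\{1,\dots,6\}$ with $\psi_{ij}\in\mathbb C e_{L_{ij}}$ for all $i,j$) and $L$ has a subsquare of order three, i.e. there are $R,C\subseteq\{1,\dots,6\}$ with $|R|=|C|=3$ such that $\{L_{ij}: i\in R, j\in C\}$ has exactly $3$ elements.
   Context: A quantum Latin square (QLS) of order $n$ is an $n\times n$ matrix $\Psi=(\psi_{ij})_{1\le i,j\le n}$ whose entries are unit vectors in $\mathbb C^n$ such that the entries of each row and the entries of each column form an orthonormal basis of $\mathbb C^n$. Two QLS $\Psi=(\psi_{ij})$ and $\Phi=(\phi_{ij})$ of order $n$ are orthogonal if $\{\psi_{ij}\otimes\phi_{ij}: 1\le i,j\le n\}$ is an orthonormal basis of $\mathbb C^n\otimes\mathbb C^n$. A Latin square of order $n$ is an $n\times n$ array with entries from an $n$-element set in which each symbol occurs exactly once in each row and each column. *)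

theory Defs
  imports Complex_Main "HOL-Library.Numeral_Type"
begin

text \<open>Vectors in C^n are modelled as functions from a finite index type 'd
(with CARD('d) = n) to complex numbers.\<close>

definition cinner :: "('d::finite \<Rightarrow> complex) \<Rightarrow> ('d \<Rightarrow> complex) \<Rightarrow> complex" where
  "cinner v w = (\<Sum>k\<in>UNIV. cnj (v k) * w k)"

definition is_onb :: "'i set \<Rightarrow> ('i \<Rightarrow> 'd::finite \<Rightarrow> complex) \<Rightarrow> bool" where
  "is_onb I b \<longleftrightarrow> finite I \<and>
     (\<forall>i\<in>I. \<forall>j\<in>I. cinner (b i) (b j) = (if i = j then 1 else 0)) \<and>
     (\<forall>v. \<exists>c. v = (\<lambda>k. \<Sum>i\<in>I. c i * b i k))"

definition tensor :: "('d \<Rightarrow> complex) \<Rightarrow> ('e \<Rightarrow> complex) \<Rightarrow> ('d \<times> 'e \<Rightarrow> complex)" where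
  "tensor v w = (\<lambda>(k, l). v k * w l)"

text \<open>A quantum Latin square of order n = CARD('n): rows, columns and vector
coordinates are all indexed by the finite type 'n.\<close>
definition is_QLS :: "('n::finite \<Rightarrow> 'n \<Rightarrow> 'n \<Rightarrow> complex) \<Rightarrow> bool" where
  "is_QLS Psi \<longleftrightarrow> (\<forall>i. is_onb UNIV (\<lambda>j. Psi i j)) \<and> (\<forall>j. is_onb UNIV (\<lambda>i. Psi i j))"

definition orthogonal_QLS :: "('n::finite \<Rightarrow> 'n \<Rightarrow> 'n \<Rightarrow> complex) \<Rightarrow> ('n \<Rightarrow> 'n \<Rightarrow> 'n \<Rightarrow> complex) \<Rightarrow> bool" where
  "orthogonal_QLS Psi Phi \<longleftrightarrow> is_onb UNIV (\<lambda>(i, j). tensor (Psi i j) (Phi i j))"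

definition latin_square :: "('n::finite \<Rightarrow> 'n \<Rightarrow> 'n) \<Rightarrow> bool" where
  "latin_square L \<longleftrightarrow> (\<forall>i. bij (\<lambda>j. L i j)) \<and> (\<forall>j. bij (\<lambda>i. L i j))"

definition classical_with :: "('n::finite \<Rightarrow> 'n \<Rightarrow> 'n \<Rightarrow> complex) \<Rightarrow> ('n \<Rightarrow> 'n \<Rightarrow> 'n) \<Rightarrow> bool" where
  "classical_with Psi L \<longleftrightarrow> latin_square L \<and>
     (\<exists>e. is_onb UNIV e \<and> (\<forall>i j. \<exists>c. Psi i j = (\<lambda>k. c * e (L i j) k)))"

definition has_subsquare3 :: "('n::finite \<Rightarrow> 'n \<Rightarrow> 'n) \<Rightarrow> bool" where
  "has_subsquare3 L \<longleftrightarrow> (\<exists>R C. card R = 3 \<and> card C = 3 \<and>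
      card {L i j | i j. i \<in> R \<and> j \<in> C} = 3)"

end

theory Submission
  imports Defs
begin

text \<open>
  Let \<open>\<Psi>\<close> be classical with Latin square \<open>L\<close> and orthogonal to \<open>\<Phi>\<close>. Then for every
  symbol \<open>s\<close> the vectors \<open>\<phi>\<^sub>i\<^sub>j\<close> with \<open>L\<^sub>i\<^sub>j = s\<close> form an orthonormal basis, so the
  entries of \<open>\<Phi>\<close> form orthonormal bases along rows, columns and symbol classes.
  A subsquare \<open>R \<times> C\<close> of order 3 splits \<open>L\<close> into four subsquares of order 3; adding the
  Parseval identities of the rows in \<open>R\<close>, the columns in \<open>C\<close> and the symbols outside the
  subsquare shows that the nine vectors of \<open>R \<times> C\<close>, and likewise those of \<open>R \<times> -C\<close>,
  form a tight frame with bound \<open>3/2\<close>. Ordered cyclically, the three broken diagonals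
  of such a block are mutually orthogonal, so each of them is a trine: three unit vectors
  in a plane summing to zero after rephasing.

  Expanding the second row of a block in the first row gives a \<open>3 \<times> 3\<close> matrix \<open>X\<close> with
  \<open>X X\<^sup>* = 3/4\<close>. For each column of the block in \<open>R \<times> -C\<close>, the cell outside \<open>R\<close>
  that carries the symbol of the top left cell gives a unit vector orthogonal to six known
  vectors, which makes the determinant of a twisted copy of \<open>X\<close> vanish. The three twisted
  determinants add up to \<open>-12 det X\<close>, contradicting the invertibility of \<open>X\<close>.
\<close>

section \<open>Inner products and orthonormal bases\<close>

lemma cnj_cinner: "cnj (cinner v w) = cinner w v"
  unfolding cinner_def by (simp add: mult.commute)

lemma cinner_scale_left: "cinner (\<lambda>k. a * v k) w = cnj a * cinner v w"
  unfolding cinner_def by (simp add: sum_distrib_left mult.assoc)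

lemma cinner_scale_right: "cinner v (\<lambda>k. a * w k) = a * cinner v w"
  unfolding cinner_def by (simp add: sum_distrib_left algebra_simps)

lemma cinner_add_left: "cinner (\<lambda>k. u k + v k) w = cinner u w + cinner v w"
  unfolding cinner_def by (simp add: sum.distrib algebra_simps)

lemma cinner_add_right: "cinner u (\<lambda>k. v k + w k) = cinner u v + cinner u w"
  unfolding cinner_def by (simp add: sum.distrib algebra_simps)

lemma cinner_zero_left [simp]: "cinner (\<lambda>k. 0) v = 0"
  unfolding cinner_def by simp

lemma cinner_delta_left: "cinner (\<lambda>l. if l = k then 1 else 0) v = v k"
proof -
  have "cinner (\<lambda>l. if l = k then 1 else 0) v = (\<Sum>l\<in>UNIV. if l = k then v l else 0)"
    unfolding cinner_def by (intro sum.cong) auto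
  then show ?thesis by simp
qed

lemma cinner_self_eq_0_iff:
  fixes v :: "'d::finite \<Rightarrow> complex"
  shows "cinner v v = 0 \<longleftrightarrow> v = (\<lambda>k. 0)"
proof
  assume "cinner v v = 0"
  then have "(\<Sum>k\<in>UNIV. complex_of_real ((cmod (v k))\<^sup>2)) = 0"
    unfolding cinner_def
    by (simp add: complex_norm_square[symmetric] mult.commute del: of_real_power)
  then have "(\<Sum>k\<in>UNIV. (cmod (v k))\<^sup>2) = 0"
    by (metis of_real_eq_0_iff of_real_sum)
  then have "\<forall>k. (cmod (v k))\<^sup>2 = 0"
    by (simp add: sum_nonneg_eq_0_iff)
  then show "v = (\<lambda>k. 0)" by auto
qed simp

lemma cinner_add_eq_0_if_sum_eq_0:
  assumes "(\<lambda>y. x y + u y + z * w y) = (\<lambda>y. 0)" and "cinner w d = 0"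
  shows "cinner x d + cinner u d = 0"
proof -
  have "(\<lambda>y. x y + u y) = (\<lambda>y. (- z) * w y)"
    using assms(1) by (simp add: fun_eq_iff add_eq_0_iff)
  then have "cinner (\<lambda>y. x y + u y) d = cnj (- z) * cinner w d"
    by (simp only: cinner_scale_left)
  with assms(2) show ?thesis
    by (simp add: cinner_add_left)
qed

lemma is_onb_iff_parseval:
  "is_onb I b \<longleftrightarrow> finite I \<and>
     (\<forall>i\<in>I. \<forall>j\<in>I. cinner (b i) (b j) = (if i = j then 1 else 0)) \<and>
     (\<forall>u v. cinner u v = (\<Sum>i\<in>I. cinner u (b i) * cinner (b i) v))"
proof (intro iffI conjI allI)
  assume onb: "is_onb I b"
  then show "finite I" and orth: "\<forall>i\<in>I. \<forall>j\<in>I. cinner (b i) (b j) = (if i = j then 1 else 0)"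
    unfolding is_onb_def by auto
  fix u v
  obtain c where c: "v = (\<lambda>k. \<Sum>i\<in>I. c i * b i k)"
    using onb unfolding is_onb_def by blast
  have cinner_v: "cinner w v = (\<Sum>i\<in>I. c i * cinner w (b i))" for w
    unfolding c cinner_def by (simp add: sum_distrib_left sum.swap[of _ UNIV] algebra_simps)
  have coeff: "cinner (b j) v = c j" if "j \<in> I" for j
  proof -
    have "cinner (b j) v = (\<Sum>i\<in>I. if i = j then c i else 0)"
      unfolding cinner_v using orth that by (intro sum.cong) auto
    then show ?thesis using \<open>finite I\<close> that by simp
  qed
  show "cinner u v = (\<Sum>i\<in>I. cinner u (b i) * cinner (b i) v)"
    unfolding cinner_v[of u] using coeff by (intro sum.cong) auto
next
  assume "finite I \<and> (\<forall>i\<in>I. \<forall>j\<in>I. cinner (b i) (b j) = (if i = j then 1 else 0)) \<and>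
     (\<forall>u v. cinner u v = (\<Sum>i\<in>I. cinner u (b i) * cinner (b i) v))"
  then have "finite I" "\<forall>i\<in>I. \<forall>j\<in>I. cinner (b i) (b j) = (if i = j then 1 else 0)"
    and parseval: "\<And>u v. cinner u v = (\<Sum>i\<in>I. cinner u (b i) * cinner (b i) v)" by blast+
  moreover have "\<forall>v. \<exists>c. v = (\<lambda>k. \<Sum>i\<in>I. c i * b i k)"
  proof (intro allI exI ext)
    fix v k
    show "v k = (\<Sum>i\<in>I. cinner (b i) v * b i k)"
      using parseval[of "\<lambda>l. if l = k then 1 else 0" v] by (simp add: cinner_delta_left mult.commute)
  qed
  ultimately show "is_onb I b"
    unfolding is_onb_def by blast
qed

lemma sum_UNIV_prod: "(\<Sum>p\<in>UNIV. h p) = (\<Sum>i\<in>UNIV. \<Sum>j\<in>UNIV. h (i, j))"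
  by (simp add: UNIV_Times_UNIV[symmetric] sum.cartesian_product del: UNIV_Times_UNIV)

lemma cinner_tensor: "cinner (tensor a b) (tensor c d) = cinner a c * cinner b d"
proof -
  have "cinner (tensor a b) (tensor c d) = (\<Sum>i\<in>UNIV. \<Sum>j\<in>UNIV. (cnj (a i) * c i) * (cnj (b j) * d j))"
    unfolding cinner_def sum_UNIV_prod by (simp add: tensor_def algebra_simps)
  also have "\<dots> = cinner a c * cinner b d"
    unfolding cinner_def by (simp add: sum_product)
  finally show ?thesis .
qed

lemma exhaust_3:
  fixes x :: 3
  shows "x = 0 \<or> x = 1 \<or> x = 2"
proof (induct x)
  case (of_int z)
  then have "z = 0 \<or> z = 1 \<or> z = 2" by fastforce
  then show ?case by auto
qed

lemma numerals_3 [simp]: "(3::3) = 0" "(4::3) = 1" "(-1::3) = 2" "(-2::3) = 1"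
  by simp_all

lemma UNIV_3: "(UNIV :: 3 set) = {0, 1, 2}"
  using exhaust_3 by auto

lemma sum_UNIV_3: "(\<Sum>k\<in>UNIV. h k) = h 0 + h (1::3) + h 2"
  unfolding UNIV_3 by (simp add: add.assoc)

lemma latin3_cyclic:
  fixes M :: "3 \<Rightarrow> 3 \<Rightarrow> 'a"
  assumes rows: "\<And>i. inj (M i)" and columns: "\<And>j. inj (\<lambda>i. M i j)"
    and entries: "\<And>i j. M i j \<in> range (M 0)"
  shows "(\<forall>i j. M i j = M 0 (i + j)) \<or> (\<forall>i j. M i j = M 0 (j - i))"
proof -
  have M: "M i j \<in> {M 0 0, M 0 1, M 0 2}" for i j
    using entries[of i j] unfolding UNIV_3 by simp
  have row: "M i j = M i j' \<Longrightarrow> j = j'" and col: "M i j = M i' j \<Longrightarrow> i = i'" for i i' j j'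
    using rows columns by (auto dest: injD)
  consider "M 1 0 = M 0 1" | "M 1 0 = M 0 2"
    using M[of 1 0] col[of 1 0 0] by auto
  then show ?thesis
  proof cases
    case 1
    have "M 1 2 = M 0 0" using 1 M[of 1 2] col[of 1 2 0] row[of 1 2 0] by auto
    moreover have "M 2 0 = M 0 2" using 1 M[of 2 0] col[of 2 0 0] col[of 2 0 1] by auto
    moreover have "M 1 1 = M 0 2" using calculation 1 M[of 1 1] row[of 1 1 0] row[of 1 1 2] by auto
    moreover have "M 2 1 = M 0 0" using calculation M[of 2 1] col[of 2 1 0] col[of 2 1 1] by auto
    moreover have "M 2 2 = M 0 1" using calculation M[of 2 2] row[of 2 2 0] row[of 2 2 1] by auto
    ultimately have "M i j = M 0 (i + j)" for i j
      using 1 exhaust_3[of i] exhaust_3[of j] by auto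
    then show ?thesis by blast
  next
    case 2
    have "M 1 1 = M 0 0" using 2 M[of 1 1] col[of 1 1 0] row[of 1 1 0] by auto
    moreover have "M 2 0 = M 0 1" using 2 M[of 2 0] col[of 2 0 0] col[of 2 0 1] by auto
    moreover have "M 1 2 = M 0 1" using calculation 2 M[of 1 2] row[of 1 2 0] row[of 1 2 1] by auto
    moreover have "M 2 1 = M 0 2" using calculation M[of 2 1] row[of 2 1 0] col[of 2 1 1] by auto
    moreover have "M 2 2 = M 0 0" using calculation 2 M[of 2 2] row[of 2 2 0] row[of 2 2 1] by auto
    ultimately have "M i j = M 0 (j - i)" for i j
      using 2 exhaust_3[of i] exhaust_3[of j] by auto
    then show ?thesis by blast
  qed
qed

section \<open>Trines\<close>

lemma gram_idempotent_entries:
  fixes x :: "3 \<Rightarrow> 'd::finite \<Rightarrow> complex"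
  assumes unit: "\<And>i. cinner (x i) (x i) = 1"
    and gram: "\<And>i i'. (\<Sum>l\<in>UNIV. cinner (x i) (x l) * cinner (x l) (x i')) = 3/2 * cinner (x i) (x i')"
  shows "cinner (x 0) (x 1) * cinner (x 1) (x 0) = 1/4"
    and "cinner (x 0) (x 2) * cinner (x 2) (x 0) = 1/4"
    and "cinner (x 1) (x 2) * cinner (x 2) (x 0) = -1/2 * cinner (x 1) (x 0)"
    and "cinner (x 2) (x 1) * cinner (x 1) (x 0) = -1/2 * cinner (x 2) (x 0)"
proof -
  define a where "a = cinner (x 0) (x 1) * cinner (x 1) (x 0)"
  define b where "b = cinner (x 0) (x 2) * cinner (x 2) (x 0)"
  define c where "c = cinner (x 1) (x 2) * cinner (x 2) (x 1)"
  have "1 + a + b = 3/2" "a + 1 + c = 3/2" "b + c + 1 = 3/2"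
    using gram[of 0 0] gram[of 1 1] gram[of 2 2] unit
    unfolding a_def b_def c_def sum_UNIV_3 by (simp_all add: mult.commute)
  then show "cinner (x 0) (x 1) * cinner (x 1) (x 0) = 1/4" "cinner (x 0) (x 2) * cinner (x 2) (x 0) = 1/4"
    unfolding a_def[symmetric] b_def[symmetric] by (simp_all add: field_simps) algebra+
  show "cinner (x 1) (x 2) * cinner (x 2) (x 0) = -1/2 * cinner (x 1) (x 0)"
    using gram[of 1 0] unit unfolding sum_UNIV_3 by (simp add: field_simps add_eq_0_iff)
  show "cinner (x 2) (x 1) * cinner (x 1) (x 0) = -1/2 * cinner (x 2) (x 0)"
    using gram[of 2 0] unit unfolding sum_UNIV_3 by (simp add: field_simps add_eq_0_iff)
qed

lemma trine_if_gram_idempotent: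
  fixes x :: "3 \<Rightarrow> 'd::finite \<Rightarrow> complex"
  assumes unit: "\<And>i. cinner (x i) (x i) = 1"
    and gram: "\<And>i i'. (\<Sum>l\<in>UNIV. cinner (x i) (x l) * cinner (x l) (x i')) = 3/2 * cinner (x i) (x i')"
  defines "z1 \<equiv> -2 * cinner (x 1) (x 0)" and "z2 \<equiv> -2 * cinner (x 2) (x 0)"
  shows "cnj z1 * z1 = 1" and "(\<lambda>k. x 0 k + z1 * x 1 k + z2 * x 2 k) = (\<lambda>k. 0)"
    and "cinner (x 0) (\<lambda>k. z1 * x 1 k) = -1/2"
proof -
  note entries = gram_idempotent_entries[OF unit gram]
  define v where "v = (\<lambda>k. x 0 k + z1 * x 1 k + z2 * x 2 k)"
  have "cinner (x i) v = 0" for i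
  proof -
    have v: "cinner (x i) v = cinner (x i) (x 0) + z1 * cinner (x i) (x 1) + z2 * cinner (x i) (x 2)"
      unfolding v_def by (simp add: cinner_add_right cinner_scale_right)
    consider "i = 0" | "i = 1" | "i = 2" using exhaust_3 by blast
    then show ?thesis
    proof cases
      case 1
      then have "cinner (x i) v = 1 - 2 * (cinner (x 0) (x 1) * cinner (x 1) (x 0))
          - 2 * (cinner (x 0) (x 2) * cinner (x 2) (x 0))"
        using unit unfolding v z1_def z2_def by (simp add: algebra_simps)
      then show ?thesis using entries(1,2) by simp
    next
      case 2
      then show ?thesis using entries(3) unit unfolding v z1_def z2_def by (simp add: algebra_simps)
    next
      case 3
      then show ?thesis using entries(4) unit unfolding v z1_def z2_def by (simp add: algebra_simps)
    qed
  qed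
  moreover have "cinner (\<lambda>k. x 0 k + z1 * x 1 k + z2 * x 2 k) w
      = cinner (x 0) w + cnj z1 * cinner (x 1) w + cnj z2 * cinner (x 2) w" for w
    by (simp add: cinner_add_left cinner_scale_left)
  ultimately have "cinner v v = 0"
    by (simp add: v_def[symmetric])
  then show "(\<lambda>k. x 0 k + z1 * x 1 k + z2 * x 2 k) = (\<lambda>k. 0)"
    unfolding v_def[symmetric] by (simp add: cinner_self_eq_0_iff)
  show "cnj z1 * z1 = 1" and "cinner (x 0) (\<lambda>k. z1 * x 1 k) = -1/2"
    using entries(1) unfolding cinner_scale_right z1_def by (simp_all add: cnj_cinner algebra_simps)
qed

section \<open>A determinant identity\<close>

definition det3 :: "(3 \<Rightarrow> 3 \<Rightarrow> 'a::comm_ring_1) \<Rightarrow> 'a" where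
  "det3 A = A 0 0 * (A 1 1 * A 2 2 - A 1 2 * A 2 1) - A 0 1 * (A 1 0 * A 2 2 - A 1 2 * A 2 0)
     + A 0 2 * (A 1 0 * A 2 1 - A 1 1 * A 2 0)"

lemma det3_mult: "det3 (\<lambda>i k. \<Sum>j\<in>UNIV. A i j * B j k) = det3 A * det3 B"
  unfolding det3_def sum_UNIV_3 by (simp add: algebra_simps)

lemma det3_eq_0_if_kernel:
  fixes A :: "3 \<Rightarrow> 3 \<Rightarrow> 'a::idom"
  assumes nonzero: "x \<noteq> (\<lambda>k. 0)" and kernel: "\<And>i. (\<Sum>k\<in>UNIV. A i k * x k) = 0"
  shows "det3 A = 0"
proof -
  define r where "r i = A i 0 * x 0 + A i 1 * x 1 + A i 2 * x 2" for i
  have r: "r i = 0" for i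
    using kernel[of i] unfolding r_def sum_UNIV_3 .
  have "det3 A * x 0 = (A 1 1 * A 2 2 - A 1 2 * A 2 1) * r 0 - (A 0 1 * A 2 2 - A 0 2 * A 2 1) * r 1
      + (A 0 1 * A 1 2 - A 0 2 * A 1 1) * r 2"
    and "det3 A * x 1 = - (A 1 0 * A 2 2 - A 1 2 * A 2 0) * r 0 + (A 0 0 * A 2 2 - A 0 2 * A 2 0) * r 1
      - (A 0 0 * A 1 2 - A 0 2 * A 1 0) * r 2"
    and "det3 A * x 2 = (A 1 0 * A 2 1 - A 1 1 * A 2 0) * r 0 - (A 0 0 * A 2 1 - A 0 1 * A 2 0) * r 1
      + (A 0 0 * A 1 1 - A 0 1 * A 1 0) * r 2"
    unfolding det3_def r_def by (simp_all add: algebra_simps)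
  then have "det3 A * x k = 0" for k
    using r exhaust_3[of k] by auto
  with nonzero show ?thesis
    by auto
qed

definition twist_weight :: "3 \<Rightarrow> 3 \<Rightarrow> complex" where
  "twist_weight t k =
     (if k = 0 then 1
      else if t = 0 then (if k = 1 then 1 else -1)
      else if t = 1 then (if k = 1 then -2 else -4)
      else (if k = 1 then 4 else 2))"

lemma sum_det3_twisted:
  "(\<Sum>j\<in>UNIV. det3 (\<lambda>i k. X i k * twist_weight (i - j) k)) = - 12 * det3 X"
  unfolding sum_UNIV_3 det3_def twist_weight_def by (simp add: algebra_simps)

lemma gram_scalar_apply:
  fixes X :: "'m::finite \<Rightarrow> 'k::finite \<Rightarrow> complex"
  assumes gram: "\<And>m m'. (\<Sum>k\<in>UNIV. X m k * cnj (X m' k)) = (if m = m' then \<gamma> else 0)"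
  shows "(\<Sum>k\<in>UNIV. X m k * (\<Sum>m'\<in>UNIV. cnj (X m' k) * q m')) = \<gamma> * q m"
proof -
  have "(\<Sum>k\<in>UNIV. X m k * (\<Sum>m'\<in>UNIV. cnj (X m' k) * q m'))
      = (\<Sum>k\<in>UNIV. \<Sum>m'\<in>UNIV. X m k * cnj (X m' k) * q m')"
    by (simp add: sum_distrib_left mult.assoc)
  also have "\<dots> = (\<Sum>m'\<in>UNIV. (\<Sum>k\<in>UNIV. X m k * cnj (X m' k)) * q m')"
    by (subst sum.swap) (simp add: sum_distrib_right)
  also have "\<dots> = (\<Sum>m'\<in>UNIV. if m = m' then \<gamma> * q m' else 0)"
    unfolding gram by (intro sum.cong) auto
  finally show ?thesis
    by simp
qed

lemma det3_twisted_eq_0: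
  fixes X :: "3 \<Rightarrow> 3 \<Rightarrow> complex" and p q :: "3 \<Rightarrow> complex"
  assumes gram: "\<And>m m'. (\<Sum>k\<in>UNIV. X m k * cnj (X m' k)) = (if m = m' then 3/4 else 0)"
    and p0: "p 0 = 0"
    and q1: "(\<Sum>m\<in>UNIV. cnj (X m 1) * q m) = p 1 / 2"
    and q2: "(\<Sum>m\<in>UNIV. cnj (X m 2) * q m) = - p 2 / 2"
    and qj: "q j = 0"
    and p1: "(\<Sum>k\<in>UNIV. X (j + 1) k * p k) = q (j + 1) / 2"
    and p2: "(\<Sum>k\<in>UNIV. X (j + 2) k * p k) = - q (j + 2) / 2"
    and nonzero: "p \<noteq> (\<lambda>k. 0) \<or> q \<noteq> (\<lambda>k. 0)"
  shows "det3 (\<lambda>i k. X i k * twist_weight (i - j) k) = 0"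
proof -
  (* As X X* = 3/4, we have q = 4/3 X w for w = X* q = (y 0, y 1, - y 2); substituting this into
     the equations for the rows j, j + 1, j + 2 of X makes y a kernel vector of the twisted matrix. *)
  define w where "w k = (\<Sum>m\<in>UNIV. cnj (X m k) * q m)" for k
  define y :: "3 \<Rightarrow> complex" where "y k = (if k = 0 then w 0 else if k = 1 then p 1 / 2 else p 2 / 2)" for k
  have w: "w 0 = y 0" "w 1 = y 1" "w 2 = - y 2"
    using q1 q2 by (simp_all add: w_def y_def)
  have "(\<Sum>k\<in>UNIV. X m k * w k) = 3/4 * q m" for m
    unfolding w_def by (rule gram_scalar_apply[OF gram])
  then have q_eq: "q m = 4/3 * (X m 0 * y 0 + X m 1 * y 1 - X m 2 * y 2)" for m
    unfolding sum_UNIV_3 w by (simp add: field_simps)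
  have Xp: "(\<Sum>k\<in>UNIV. X m k * p k) = 2 * (X m 1 * y 1 + X m 2 * y 2)" for m
    unfolding sum_UNIV_3 using p0 by (simp add: y_def algebra_simps)
  have row: "(\<Sum>k\<in>UNIV. X (j + t) k * twist_weight t k * y k) = 0" for t
  proof -
    consider "t = 0" | "t = 1" | "t = 2" using exhaust_3 by blast
    then show ?thesis
    proof cases
      case 1
      have "(\<Sum>k\<in>UNIV. X (j + t) k * twist_weight t k * y k) = 3/4 * q j"
        unfolding q_eq 1 by (simp add: sum_UNIV_3 twist_weight_def algebra_simps)
      then show ?thesis using qj by simp
    next
      case 2
      have "(\<Sum>k\<in>UNIV. X (j + t) k * twist_weight t k * y k)
          = 3/2 * (q (j + 1) / 2 - (\<Sum>k\<in>UNIV. X (j + 1) k * p k))"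
        unfolding Xp q_eq 2 by (simp add: sum_UNIV_3 twist_weight_def algebra_simps)
      then show ?thesis using p1 by simp
    next
      case 3
      have "(\<Sum>k\<in>UNIV. X (j + t) k * twist_weight t k * y k)
          = -3/2 * (- q (j + 2) / 2 - (\<Sum>k\<in>UNIV. X (j + 2) k * p k))"
        unfolding Xp q_eq 3 by (simp add: sum_UNIV_3 twist_weight_def field_simps)
      then show ?thesis using p2 by simp
    qed
  qed
  have "y \<noteq> (\<lambda>k. 0)"
  proof
    assume "y = (\<lambda>k. 0)"
    then have "y 0 = 0" "y 1 = 0" "y 2 = 0" by simp_all
    then have "p k = 0" "q k = 0" for k
      using p0 q_eq exhaust_3[of k] by (auto simp: y_def)
    with nonzero show False by auto
  qed
  moreover have "(\<Sum>k\<in>UNIV. X i k * twist_weight (i - j) k * y k) = 0" for i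
    using row[of "i - j"] by simp
  ultimately show ?thesis
    by (intro det3_eq_0_if_kernel[of y]) (simp_all add: mult.assoc)
qed

section \<open>Two rows of a quantum Latin square\<close>

(* f and g: one row of Phi, split along C and its complement; a and b: a second row, split the same
   way and rephased and reindexed along the broken diagonals of the two cyclic blocks. *)
locale row_pair =
  fixes f g a b :: "3 \<Rightarrow> 'd::finite \<Rightarrow> complex"
  assumes parseval: "\<And>u v. cinner u v
      = (\<Sum>k\<in>UNIV. cinner u (f k) * cinner (f k) v) + (\<Sum>m\<in>UNIV. cinner u (g m) * cinner (g m) v)"
    and cinner_f_a: "\<And>k k'. cinner (f k') (a k) = (if k' = k then -1/2 else 0)"
    and cinner_g_b: "\<And>m m'. cinner (g m') (b m) = (if m' = m then -1/2 else 0)"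
    and cinner_b_b: "\<And>m m'. cinner (b m) (b m') = (if m = m' then 1 else 0)"
    and cinner_a_b: "\<And>k m. cinner (a k) (b m) = 0"
begin

definition X :: "3 \<Rightarrow> 3 \<Rightarrow> complex" where
  "X m k = cinner (g m) (a k)"

lemma cinner_a_left: "cinner (a k) w = -1/2 * cinner (f k) w + (\<Sum>m\<in>UNIV. cnj (X m k) * cinner (g m) w)"
proof -
  have "cinner (a k) (f k') = (if k' = k then -1/2 else 0)" for k'
    unfolding cnj_cinner[of "f k'" "a k", symmetric] cinner_f_a by auto
  then have "(\<Sum>k'\<in>UNIV. cinner (a k) (f k') * cinner (f k') w)
      = (\<Sum>k'\<in>UNIV. if k' = k then -1/2 * cinner (f k') w else 0)"
    by (intro sum.cong) auto
  moreover have "cinner (a k) (g m) = cnj (X m k)" for m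
    by (simp add: X_def cnj_cinner)
  ultimately show ?thesis
    using parseval[of "a k" w] by simp
qed

lemma cinner_f_b: "cinner (f k) (b m) = - cnj (X m k)"
proof -
  have "(\<Sum>m'\<in>UNIV. cnj (X m' k) * cinner (g m') (b m))
      = (\<Sum>m'\<in>UNIV. if m' = m then -1/2 * cnj (X m' k) else 0)"
    by (intro sum.cong) (auto simp: cinner_g_b)
  then have "- cinner (f k) (b m) = cnj (X m k)"
    using cinner_a_left[of k "b m"] cinner_a_b[of k m] by simp
  then show ?thesis
    by (metis minus_minus)
qed

lemma cinner_b_left: "cinner (b m) w = -1/2 * cinner (g m) w - (\<Sum>k\<in>UNIV. X m k * cinner (f k) w)"
proof -
  have "cinner (b m) (g m') = (if m' = m then -1/2 else 0)" for m'
    unfolding cnj_cinner[of "g m'" "b m", symmetric] cinner_g_b by auto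
  then have "(\<Sum>m'\<in>UNIV. cinner (b m) (g m') * cinner (g m') w)
      = (\<Sum>m'\<in>UNIV. if m' = m then -1/2 * cinner (g m') w else 0)"
    by (intro sum.cong) auto
  moreover have "cinner (b m) (f k) = - X m k" for k
    using cnj_cinner[of "f k" "b m"] by (simp add: cinner_f_b)
  ultimately show ?thesis
    using parseval[of "b m" w] by (simp add: sum_negf)
qed

lemma gram_X: "(\<Sum>k\<in>UNIV. X m k * cnj (X m' k)) = (if m = m' then 3/4 else 0)"
proof -
  have "(if m = m' then 1 else 0) = (if m = m' then 1/4 else 0) + (\<Sum>k\<in>UNIV. X m k * cnj (X m' k))"
    using cinner_b_left[of m "b m'"] by (simp add: cinner_b_b cinner_g_b cinner_f_b sum_negf)
  then show ?thesis
    by (cases "m = m'") (simp_all add: field_simps add_eq_0_iff)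
qed

lemma det3_X_neq_0: "det3 X \<noteq> 0"
proof -
  have "det3 X * det3 (\<lambda>j k. cnj (X k j)) = det3 (\<lambda>i k. if i = k then 3/4 else 0)"
    unfolding det3_mult[symmetric] gram_X ..
  also have "\<dots> \<noteq> 0"
    by (simp add: det3_def)
  finally show ?thesis
    by auto
qed

lemma det3_twisted_X_eq_0:
  assumes "d \<noteq> (\<lambda>y. 0)"
    and "cinner (f 0) d = 0" "cinner (a 1) d = 0" "cinner (f 2) d + cinner (a 2) d = 0"
    and "cinner (g j) d = 0" "cinner (b (j + 2)) d = 0" "cinner (g (j + 1)) d + cinner (b (j + 1)) d = 0"
  shows "det3 (\<lambda>i k. X i k * twist_weight (i - j) k) = 0"
proof (rule det3_twisted_eq_0[OF gram_X])
  define p where "p k = cinner (f k) d" for k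
  define q where "q m = cinner (g m) d" for m
  show "p 0 = 0" "q j = 0"
    using assms unfolding p_def q_def by simp_all
  show "(\<Sum>m\<in>UNIV. cnj (X m 1) * q m) = p 1 / 2"
    using assms(3) cinner_a_left[of 1 d] unfolding p_def q_def by simp
  show "(\<Sum>m\<in>UNIV. cnj (X m 2) * q m) = - p 2 / 2"
    using assms(4) cinner_a_left[of 2 d] unfolding p_def q_def by (simp add: field_simps add_eq_0_iff)
  show "(\<Sum>k\<in>UNIV. X (j + 1) k * p k) = q (j + 1) / 2"
    using assms(7) cinner_b_left[of "j + 1" d] unfolding p_def q_def by algebra
  show "(\<Sum>k\<in>UNIV. X (j + 2) k * p k) = - q (j + 2) / 2"
    using assms(6) cinner_b_left[of "j + 2" d] unfolding p_def q_def by (simp add: field_simps)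
  show "p \<noteq> (\<lambda>k. 0) \<or> q \<noteq> (\<lambda>k. 0)"
  proof (rule ccontr)
    assume "\<not> ?thesis"
    then have "cinner (f k) d = 0" "cinner (g k) d = 0" for k
      unfolding p_def q_def by meson+
    then have "cinner d d = 0"
      using parseval[of d d] by simp
    with assms(1) show False
      by (simp add: cinner_self_eq_0_iff)
  qed
qed

end

section \<open>Quantum Latin squares orthogonal to a Latin square\<close>

locale orthogonal_to_classical =
  fixes Psi Phi :: "'n::finite \<Rightarrow> 'n \<Rightarrow> 'n \<Rightarrow> complex" and L :: "'n \<Rightarrow> 'n \<Rightarrow> 'n"
    and e c :: "'n \<Rightarrow> 'n \<Rightarrow> complex"
  assumes Psi: "is_QLS Psi" and orthogonal: "orthogonal_QLS Psi Phi" and e: "is_onb UNIV e"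
    and classical: "\<And>i j. Psi i j = (\<lambda>k. c i j * e (L i j) k)"
begin

lemma cinner_e: "cinner (e s) (e t) = (if s = t then 1 else 0)"
  using e unfolding is_onb_def by simp

lemma coefficient_unit: "cnj (c i j) * c i j = 1"
proof -
  have "cinner (Psi i j) (Psi i j) = 1"
    using Psi unfolding is_QLS_def is_onb_def by simp
  then show ?thesis
    unfolding classical cinner_scale_left cinner_scale_right cinner_e by simp
qed

lemma cinner_Psi_left: "cinner (Psi i j) w = cnj (c i j) * cinner (e (L i j)) w"
  unfolding classical by (rule cinner_scale_left)

lemma cinner_Psi_right: "cinner w (Psi i j) = c i j * cinner w (e (L i j))"
  unfolding classical by (rule cinner_scale_right)

lemma symbol_class_orthonormal:
  assumes "L i j = s" "L i' j' = s"
  shows "cinner (Phi i j) (Phi i' j') = (if (i, j) = (i', j') then 1 else 0)"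
proof -
  have "cinner (tensor (Psi i j) (Phi i j)) (tensor (Psi i' j') (Phi i' j'))
      = cnj (c i j) * c i' j' * cinner (Phi i j) (Phi i' j')"
    using assms by (simp add: cinner_tensor cinner_Psi_left cinner_Psi_right cinner_e mult_ac)
  moreover have "cinner (tensor (Psi i j) (Phi i j)) (tensor (Psi i' j') (Phi i' j'))
      = (if (i, j) = (i', j') then 1 else 0)"
    using orthogonal unfolding orthogonal_QLS_def is_onb_def by auto
  ultimately have "cnj (c i j) * c i' j' * cinner (Phi i j) (Phi i' j') = (if (i, j) = (i', j') then 1 else 0)"
    by argo
  moreover have "cnj (c i j) * c i' j' \<noteq> 0"
    using coefficient_unit[of i j] coefficient_unit[of i' j'] by auto
  ultimately show ?thesis
    using coefficient_unit[of i j] by (auto split: if_splits)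
qed

lemma symbol_class_parseval:
  "cinner u v = (\<Sum>(i, j)\<in>{(i, j). L i j = s}. cinner u (Phi i j) * cinner (Phi i j) v)"
proof -
  define T where "T = (\<lambda>(i, j). tensor (Psi i j) (Phi i j))"
  have "cinner u v = cinner (tensor (e s) u) (tensor (e s) v)"
    by (simp add: cinner_tensor cinner_e)
  also have "\<dots> = (\<Sum>p\<in>UNIV. cinner (tensor (e s) u) (T p) * cinner (T p) (tensor (e s) v))"
    using orthogonal unfolding orthogonal_QLS_def is_onb_iff_parseval T_def by blast
  also have "\<dots> = (\<Sum>p\<in>UNIV. if p \<in> {(i, j). L i j = s}
      then (\<lambda>(i, j). cinner u (Phi i j) * cinner (Phi i j) v) p else 0)"
  proof (intro sum.cong refl, clarify)
    fix i j
    have "cinner (tensor (e s) u) (T (i, j)) * cinner (T (i, j)) (tensor (e s) v)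
        = cnj (c i j) * c i j * (cinner (e s) (e (L i j)) * cinner (e (L i j)) (e s))
          * (cinner u (Phi i j) * cinner (Phi i j) v)"
      unfolding T_def by (simp add: cinner_tensor cinner_Psi_left cinner_Psi_right algebra_simps)
    then show "cinner (tensor (e s) u) (T (i, j)) * cinner (T (i, j)) (tensor (e s) v)
        = (if (i, j) \<in> {(i, j). L i j = s} then cinner u (Phi i j) * cinner (Phi i j) v else 0)"
      unfolding coefficient_unit cinner_e by auto
  qed
  also have "\<dots> = (\<Sum>(i, j)\<in>{(i, j). L i j = s}. cinner u (Phi i j) * cinner (Phi i j) v)"
    unfolding sum.inter_restrict[OF finite, symmetric] by simp
  finally show ?thesis .
qed

lemma symbol_class_onb: "is_onb {(i, j). L i j = s} (\<lambda>(i, j). Phi i j)"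
  unfolding is_onb_iff_parseval
proof (intro conjI ballI allI)
  show "finite {(i, j). L i j = s}" by simp
next
  fix p p' assume "p \<in> {(i, j). L i j = s}" "p' \<in> {(i, j). L i j = s}"
  moreover obtain i j i' j' where "p = (i, j)" "p' = (i', j')"
    by fastforce
  ultimately show "cinner ((\<lambda>(i, j). Phi i j) p) ((\<lambda>(i, j). Phi i j) p') = (if p = p' then 1 else 0)"
    using symbol_class_orthonormal[of i j s i' j'] by simp
next
  fix u v
  show "cinner u v = (\<Sum>p\<in>{(i, j). L i j = s}.
      cinner u ((\<lambda>(i, j). Phi i j) p) * cinner ((\<lambda>(i, j). Phi i j) p) v)"
    using symbol_class_parseval[of u v s] unfolding case_prod_beta' .
qed

end

definition cyclic_block :: "('n \<Rightarrow> 'n \<Rightarrow> 's) \<Rightarrow> (3 \<Rightarrow> 'n) \<Rightarrow> (3 \<Rightarrow> 'n) \<Rightarrow> bool" where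
  "cyclic_block L r c \<longleftrightarrow> inj r \<and> inj c \<and> (\<forall>i j. L (r i) (c j) = L (r 0) (c (i + j)))"

locale QLS_orthogonal_latin =
  fixes Phi :: "'n::finite \<Rightarrow> 'n \<Rightarrow> 'n \<Rightarrow> complex" and L :: "'n \<Rightarrow> 'n \<Rightarrow> 'n"
  assumes QLS: "is_QLS Phi"
    and symbol_onb: "\<And>s. is_onb {(i, j). L i j = s} (\<lambda>(i, j). Phi i j)"
begin

lemma cinner_Phi_self: "cinner (Phi i j) (Phi i j) = 1"
  using QLS unfolding is_QLS_def is_onb_def by simp

lemma cinner_Phi_row: "j \<noteq> j' \<Longrightarrow> cinner (Phi i j) (Phi i j') = 0"
  using QLS unfolding is_QLS_def is_onb_def by simp

lemma cinner_Phi_column: "i \<noteq> i' \<Longrightarrow> cinner (Phi i j) (Phi i' j) = 0"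
  using QLS unfolding is_QLS_def is_onb_def by simp

lemma cinner_Phi_symbol: "(i, j) \<noteq> (i', j') \<Longrightarrow> L i j = L i' j' \<Longrightarrow> cinner (Phi i j) (Phi i' j') = 0"
  using symbol_onb[of "L i j"] unfolding is_onb_def by auto

lemma parseval_row: "cinner u v = (\<Sum>j\<in>UNIV. cinner u (Phi i j) * cinner (Phi i j) v)"
  using QLS unfolding is_QLS_def is_onb_iff_parseval by blast

lemma parseval_column: "cinner u v = (\<Sum>i\<in>UNIV. cinner u (Phi i j) * cinner (Phi i j) v)"
  using QLS unfolding is_QLS_def is_onb_iff_parseval by blast

lemma parseval_symbol:
  "cinner u v = (\<Sum>(i, j)\<in>{(i, j). L i j = s}. cinner u (Phi i j) * cinner (Phi i j) v)"
  using symbol_onb[of s] unfolding is_onb_iff_parseval case_prod_beta' by blast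

lemma cyclic_block_orthogonal:
  assumes block: "cyclic_block L r c" and diagonals: "j - i \<noteq> j' - i'"
  shows "cinner (Phi (r i) (c j)) (Phi (r i') (c j')) = 0"
proof -
  have "inj r" "inj c" and L: "\<And>i j. L (r i) (c j) = L (r 0) (c (i + j))"
    using block unfolding cyclic_block_def by auto
  consider "i = i'" | "j = j'" | "i \<noteq> i'" "j \<noteq> j'" by blast
  then show ?thesis
  proof cases
    case 1
    with diagonals \<open>inj c\<close> have "c j \<noteq> c j'" by (auto dest: injD)
    with 1 show ?thesis by (simp add: cinner_Phi_row)
  next
    case 2
    with diagonals \<open>inj r\<close> have "r i \<noteq> r i'" by (auto dest: injD)
    with 2 show ?thesis by (simp add: cinner_Phi_column)
  next
    case 3
    then have "i + j = i' + j'"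
      using diagonals exhaust_3[of i] exhaust_3[of i'] exhaust_3[of j] exhaust_3[of j'] by auto
    then have "L (r i) (c j) = L (r i') (c j')"
      using L by metis
    moreover have "r i \<noteq> r i'"
      using 3 \<open>inj r\<close> by (auto dest: injD)
    ultimately show ?thesis
      by (simp add: cinner_Phi_symbol)
  qed
qed

lemma cyclic_block_diagonal_trine:
  fixes k :: 3
  assumes block: "cyclic_block L r c"
    and frame: "\<And>u v. (\<Sum>i\<in>UNIV. \<Sum>j\<in>UNIV. cinner u (Phi (r i) (c j)) * cinner (Phi (r i) (c j)) v)
      = 3/2 * cinner u v"
  defines "z1 \<equiv> -2 * cinner (Phi (r 1) (c (k + 1))) (Phi (r 0) (c k))"
    and "z2 \<equiv> -2 * cinner (Phi (r 2) (c (k + 2))) (Phi (r 0) (c k))"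
  shows "cnj z1 * z1 = 1"
    and "(\<lambda>y. Phi (r 0) (c k) y + z1 * Phi (r 1) (c (k + 1)) y + z2 * Phi (r 2) (c (k + 2)) y) = (\<lambda>y. 0)"
    and "cinner (Phi (r 0) (c k)) (\<lambda>y. z1 * Phi (r 1) (c (k + 1)) y) = -1/2"
proof -
  define x where "x i = Phi (r i) (c (k + i))" for i
  have unit: "cinner (x i) (x i) = 1" for i
    unfolding x_def by (rule cinner_Phi_self)
  have gram: "(\<Sum>l\<in>UNIV. cinner (x i) (x l) * cinner (x l) (x i')) = 3/2 * cinner (x i) (x i')" for i i'
  proof -
    have "3/2 * cinner (x i) (x i')
        = (\<Sum>l\<in>UNIV. \<Sum>j\<in>UNIV. cinner (x i) (Phi (r l) (c j)) * cinner (Phi (r l) (c j)) (x i'))"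
      by (rule frame[symmetric])
    also have "\<dots> = (\<Sum>l\<in>UNIV. cinner (x i) (x l) * cinner (x l) (x i'))"
    proof (rule sum.cong[OF refl])
      fix l
      have "cinner (x i) (Phi (r l) (c j)) = 0" if "j \<noteq> k + l" for j
        unfolding x_def using cyclic_block_orthogonal[OF block, of "k + i" i j l] that
        by (simp add: eq_diff_eq)
      then have "(\<Sum>j\<in>UNIV. cinner (x i) (Phi (r l) (c j)) * cinner (Phi (r l) (c j)) (x i'))
          = (\<Sum>j\<in>UNIV. if j = k + l then cinner (x i) (x l) * cinner (x l) (x i') else 0)"
        unfolding x_def by (intro sum.cong) auto
      then show "(\<Sum>j\<in>UNIV. cinner (x i) (Phi (r l) (c j)) * cinner (Phi (r l) (c j)) (x i'))
          = cinner (x i) (x l) * cinner (x l) (x i')"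
        by simp
    qed
    finally show ?thesis by simp
  qed
  note trine = trine_if_gram_idempotent[of x, OF unit gram]
  show "cnj z1 * z1 = 1"
    using trine(1) unfolding z1_def x_def by simp
  show "(\<lambda>y. Phi (r 0) (c k) y + z1 * Phi (r 1) (c (k + 1)) y + z2 * Phi (r 2) (c (k + 2)) y) = (\<lambda>y. 0)"
    using trine(2) unfolding z1_def z2_def x_def by simp
  show "cinner (Phi (r 0) (c k)) (\<lambda>y. z1 * Phi (r 1) (c (k + 1)) y) = -1/2"
    using trine(3) unfolding z1_def x_def by simp
qed

end

section \<open>Latin squares of order $2m$ with a subsquare of order $m$\<close>

lemma card_Compl: "card (- A) = CARD('a::finite) - card (A :: 'a set)"
  by (simp add: Compl_eq_Diff_UNIV card_Diff_subset)

locale half_subsquare =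
  fixes L :: "'n::finite \<Rightarrow> 'n \<Rightarrow> 'n" and R C :: "'n set"
  assumes latin: "latin_square L"
    and card_C: "card C = card R"
    and card_subsquare_symbols: "card {L i j | i j. i \<in> R \<and> j \<in> C} = card R"
    and card_UNIV: "CARD('n) = 2 * card R"
begin

definition symbols :: "'n set" where
  "symbols = {L i j | i j. i \<in> R \<and> j \<in> C}"

lemma bij_row: "bij (L i)"
  using latin unfolding latin_square_def by simp

lemma bij_column: "bij (\<lambda>i. L i j)"
  using latin unfolding latin_square_def by simp

lemma inj_on_row: "inj_on (L i) A"
  using bij_row bij_is_inj inj_on_subset by blast

lemma inj_on_column: "inj_on (\<lambda>i. L i j) A"
  using bij_column bij_is_inj inj_on_subset by blast

lemma row_image: assumes "i \<in> R" shows "L i ` C = symbols"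
proof (rule card_subset_eq)
  show "L i ` C \<subseteq> symbols"
    using assms unfolding symbols_def by blast
  show "card (L i ` C) = card symbols"
    using card_C card_subsquare_symbols by (simp add: card_image inj_on_row symbols_def)
qed simp

lemma column_image: assumes "j \<in> C" shows "(\<lambda>i. L i j) ` R = symbols"
proof (rule card_subset_eq)
  show "(\<lambda>i. L i j) ` R \<subseteq> symbols"
    using assms unfolding symbols_def by blast
  show "card ((\<lambda>i. L i j) ` R) = card symbols"
    using card_subsquare_symbols by (simp add: card_image inj_on_column symbols_def)
qed simp

lemma row_image_Compl: "i \<in> R \<Longrightarrow> L i ` (- C) = - symbols"
  by (simp add: bij_image_Compl_eq bij_row row_image)

lemma column_image_outside: assumes "j \<notin> C" shows "(\<lambda>i. L i j) ` R = - symbols"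
proof (rule card_subset_eq)
  show "(\<lambda>i. L i j) ` R \<subseteq> - symbols"
    using assms row_image_Compl by blast
  show "card ((\<lambda>i. L i j) ` R) = card (- symbols)"
    using card_subsquare_symbols card_UNIV
    by (simp add: card_image inj_on_column card_Compl symbols_def)
qed simp

lemma symbol_in_iff: "L i j \<in> symbols \<longleftrightarrow> (i \<in> R \<longleftrightarrow> j \<in> C)"
proof (cases "j \<in> C")
  case True
  then have "(\<lambda>i. L i j) ` (- R) = - symbols"
    by (simp add: bij_image_Compl_eq bij_column column_image)
  with True show ?thesis
    using column_image[OF True] by blast
next
  case False
  then have "(\<lambda>i. L i j) ` (- R) = symbols"
    by (simp add: bij_image_Compl_eq bij_column column_image_outside)
  with False show ?thesis
    using column_image_outside[OF False] by blast
qed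

lemma block_latin3_cyclic:
  fixes r c :: "3 \<Rightarrow> 'n"
  assumes r: "bij_betw r UNIV R" and c: "bij_betw c UNIV D" and D: "D = C \<or> D = - C"
  shows "(\<forall>i j. L (r i) (c j) = L (r 0) (c (i + j))) \<or> (\<forall>i j. L (r i) (c j) = L (r 0) (c (j - i)))"
proof (rule latin3_cyclic[where M = "\<lambda>i j. L (r i) (c j)"])
  have "inj r" "inj c" "range c = D"
    using r c by (auto simp: bij_betw_def)
  show "inj (\<lambda>j. L (r i) (c j))" for i
    using inj_on_row[of "r i" UNIV] \<open>inj c\<close> unfolding inj_def inj_on_def by blast
  show "inj (\<lambda>i. L (r i) (c j))" for j
    using inj_on_column[of "c j" UNIV] \<open>inj r\<close> unfolding inj_def inj_on_def by blast
  have "L (r i) ` D = L (r 0) ` D" for i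
  proof -
    have "r i \<in> R" "r 0 \<in> R"
      using r by (auto simp: bij_betw_def)
    then show ?thesis
      using D row_image row_image_Compl by metis
  qed
  with \<open>range c = D\<close> show "L (r i) (c j) \<in> range (\<lambda>j. L (r 0) (c j))" for i j
    by (metis image_image rangeI)
qed

lemma cyclic_block_exists:
  assumes "card R = 3" and r: "bij_betw r UNIV R" and D: "D = C \<or> D = - C"
  shows "\<exists>c. bij_betw c UNIV D \<and> cyclic_block L r c"
proof -
  have "card D = CARD(3)"
    using D assms(1) card_C card_UNIV by (auto simp: card_Compl)
  then obtain c :: "3 \<Rightarrow> 'n" where c: "bij_betw c UNIV D"
    using finite_same_card_bij[of "UNIV :: 3 set" D] by auto
  have "inj r"
    using r by (simp add: bij_betw_def)
  consider "\<And>i j. L (r i) (c j) = L (r 0) (c (i + j))" | "\<And>i j. L (r i) (c j) = L (r 0) (c (j - i))"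
    using block_latin3_cyclic[OF r c D] by blast
  then show ?thesis
  proof cases
    case 1
    then show ?thesis
      using c \<open>inj r\<close> unfolding cyclic_block_def bij_betw_def by blast
  next
    case 2
    have "bij_betw (c \<circ> uminus) UNIV D"
      using c bij_uminus by (blast intro: bij_betw_trans)
    moreover have "L (r i) (c (- j)) = L (r 0) (c (- (i + j)))" for i j
    proof -
      have "- j - i = - (i + j)"
        by (simp add: add.commute)
      then show ?thesis
        using 2[of i "- j"] by metis
    qed
    ultimately have "bij_betw (c \<circ> uminus) UNIV D \<and> cyclic_block L r (c \<circ> uminus)"
      using \<open>inj r\<close> unfolding cyclic_block_def bij_betw_def by simp
    then show ?thesis by blast
  qed
qed

end

section \<open>Subsquares of order three\<close>

locale QLS_half_subsquare = QLS_orthogonal_latin Phi L + half_subsquare L R C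
  for Phi :: "'n::finite \<Rightarrow> 'n \<Rightarrow> 'n \<Rightarrow> complex" and L R C
begin

lemma subsquare_frame:
  assumes D: "D = C \<or> D = - C"
  shows "(\<Sum>i\<in>R. \<Sum>j\<in>D. cinner u (Phi i j) * cinner (Phi i j) v) = card R / 2 * cinner u v"
proof -
  define F where "F A = (\<Sum>(i, j)\<in>A. cinner u (Phi i j) * cinner (Phi i j) v)" for A
  have F_Un: "F (A \<union> B) = F A + F B" if "A \<inter> B = {}" for A B
    unfolding F_def using that by (simp add: sum.union_disjoint)
  have rows: "F (R \<times> UNIV) = card R * cinner u v"
    unfolding F_def sum.cartesian_product[symmetric] by (simp add: parseval_row[symmetric])
  have columns: "F (UNIV \<times> C) = card R * cinner u v"
    unfolding F_def sum.cartesian_product[symmetric]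
    by (subst sum.swap) (simp add: parseval_column[symmetric] card_C)
  have "F {(i, j). L i j \<notin> symbols}
      = (\<Sum>s\<in>- symbols. F {p. p \<in> {(i, j). L i j \<notin> symbols} \<and> (\<lambda>(i, j). L i j) p = s})"
    unfolding F_def by (rule sum.group[symmetric]) auto
  also have "\<dots> = (\<Sum>s\<in>- symbols. F {(i, j). L i j = s})"
    by (intro sum.cong refl arg_cong[where f = F]) auto
  also have "\<dots> = card (- symbols) * cinner u v"
    unfolding F_def by (simp add: parseval_symbol[symmetric])
  finally have symbols: "F {(i, j). L i j \<notin> symbols} = card R * cinner u v"
    using card_subsquare_symbols card_UNIV by (simp add: card_Compl symbols_def)
  have "F (R \<times> UNIV) = F (R \<times> C) + F (R \<times> (- C))"
      "F (UNIV \<times> C) = F (R \<times> C) + F ((- R) \<times> C)"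
      "F {(i, j). L i j \<notin> symbols} = F (R \<times> (- C)) + F ((- R) \<times> C)"
    by (rule trans[OF arg_cong[where f = F] F_Un], use symbol_in_iff in auto)+
  then have "F (R \<times> C) + F (R \<times> (- C)) = card R * cinner u v"
      "F (R \<times> C) + F ((- R) \<times> C) = card R * cinner u v"
      "F (R \<times> (- C)) + F ((- R) \<times> C) = card R * cinner u v"
    using rows columns symbols by simp_all
  then have "F (R \<times> C) = card R / 2 * cinner u v" "F (R \<times> (- C)) = card R / 2 * cinner u v"
    by (simp_all add: field_simps) algebra+
  then have "F (R \<times> D) = card R / 2 * cinner u v"
    using D by auto
  then show ?thesis
    unfolding F_def sum.cartesian_product .
qed

end

locale cyclic_blocks = QLS_half_subsquare Phi L R C
  for Phi :: "'n::finite \<Rightarrow> 'n \<Rightarrow> 'n \<Rightarrow> complex" and L R C +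
  fixes r c c' :: "3 \<Rightarrow> 'n"
  assumes card_R: "card R = 3"
    and r: "bij_betw r UNIV R" and c: "bij_betw c UNIV C" and c': "bij_betw c' UNIV (- C)"
    and cyclic: "cyclic_block L r c" "cyclic_block L r c'"
begin

definition phase :: "(3 \<Rightarrow> 'n) \<Rightarrow> 3 \<Rightarrow> 3 \<Rightarrow> complex" where
  "phase cx k i = -2 * cinner (Phi (r i) (cx (k + i))) (Phi (r 0) (cx k))"

lemma block_frame:
  assumes "cx = c \<or> cx = c'"
  shows "(\<Sum>i\<in>UNIV. \<Sum>j\<in>UNIV. cinner u (Phi (r i) (cx j)) * cinner (Phi (r i) (cx j)) v) = 3/2 * cinner u v"
proof -
  obtain D where D: "bij_betw cx UNIV D" "D = C \<or> D = - C"
    using assms c c' by blast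
  have "(\<Sum>i\<in>UNIV. \<Sum>j\<in>UNIV. cinner u (Phi (r i) (cx j)) * cinner (Phi (r i) (cx j)) v)
      = (\<Sum>i\<in>R. \<Sum>j\<in>D. cinner u (Phi i j) * cinner (Phi i j) v)"
    using sum.reindex_bij_betw[OF D(1), of "\<lambda>j. cinner u (Phi (r _) j) * cinner (Phi (r _) j) v"]
      sum.reindex_bij_betw[OF r, of "\<lambda>i. \<Sum>j\<in>D. cinner u (Phi i j) * cinner (Phi i j) v"]
    by simp
  also have "\<dots> = 3/2 * cinner u v"
    using subsquare_frame[OF D(2)] card_R by simp
  finally show ?thesis .
qed

lemma diagonal_trine:
  assumes "cx = c \<or> cx = c'"
  shows "cnj (phase cx k 1) * phase cx k 1 = 1"
    and "(\<lambda>y. Phi (r 0) (cx k) y + phase cx k 1 * Phi (r 1) (cx (k + 1)) y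
            + phase cx k 2 * Phi (r 2) (cx (k + 2)) y) = (\<lambda>y. 0)"
    and "cinner (Phi (r 0) (cx k)) (\<lambda>y. phase cx k 1 * Phi (r 1) (cx (k + 1)) y) = -1/2"
  using cyclic_block_diagonal_trine[of r cx, OF _ block_frame[OF assms]] cyclic assms
  unfolding phase_def by auto

lemma cinner_diagonal:
  assumes "cx = c \<or> cx = c'"
  shows "cinner (Phi (r 0) (cx k')) (\<lambda>y. phase cx k 1 * Phi (r 1) (cx (k + 1)) y)
    = (if k' = k then -1/2 else 0)"
proof (cases "k' = k")
  case False
  then have "cinner (Phi (r 0) (cx k')) (Phi (r 1) (cx (k + 1))) = 0"
    using cyclic_block_orthogonal[of r cx "k'" 0 "k + 1" 1] cyclic assms by auto
  with False show ?thesis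
    by (simp add: cinner_scale_right)
qed (use diagonal_trine(3)[OF assms] in simp)

definition f :: "3 \<Rightarrow> 'n \<Rightarrow> complex" where
  "f k = Phi (r 0) (c k)"

definition g :: "3 \<Rightarrow> 'n \<Rightarrow> complex" where
  "g m = Phi (r 0) (c' m)"

definition a :: "3 \<Rightarrow> 'n \<Rightarrow> complex" where
  "a k = (\<lambda>y. phase c k 1 * Phi (r 1) (c (k + 1)) y)"

definition b :: "3 \<Rightarrow> 'n \<Rightarrow> complex" where
  "b m = (\<lambda>y. phase c' m 1 * Phi (r 1) (c' (m + 1)) y)"

sublocale row_pair f g a b
proof
  fix u v
  have "cinner u v = (\<Sum>j\<in>C. cinner u (Phi (r 0) j) * cinner (Phi (r 0) j) v)
      + (\<Sum>j\<in>- C. cinner u (Phi (r 0) j) * cinner (Phi (r 0) j) v)"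
    using parseval_row[of u v "r 0"] sum.union_disjoint[of C "- C"] by simp
  then show "cinner u v = (\<Sum>k\<in>UNIV. cinner u (f k) * cinner (f k) v) + (\<Sum>m\<in>UNIV. cinner u (g m) * cinner (g m) v)"
    unfolding f_def g_def
    using sum.reindex_bij_betw[OF c, of "\<lambda>j. cinner u (Phi (r 0) j) * cinner (Phi (r 0) j) v"]
      sum.reindex_bij_betw[OF c', of "\<lambda>j. cinner u (Phi (r 0) j) * cinner (Phi (r 0) j) v"]
    by simp
next
  fix k k'
  show "cinner (f k') (a k) = (if k' = k then -1/2 else 0)"
    unfolding f_def a_def by (rule cinner_diagonal) simp
next
  fix m m'
  show "cinner (g m') (b m) = (if m' = m then -1/2 else 0)"
    unfolding g_def b_def by (rule cinner_diagonal) simp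
next
  fix m m'
  show "cinner (b m) (b m') = (if m = m' then 1 else 0)"
  proof (cases "m = m'")
    case True
    then show ?thesis
      using diagonal_trine(1)[of c' m] by (simp add: b_def cinner_scale_left cinner_scale_right cinner_Phi_self)
  next
    case False
    then have "c' (m + 1) \<noteq> c' (m' + 1)"
      using c' by (auto simp: bij_betw_def dest: injD)
    with False show ?thesis
      by (simp add: b_def cinner_scale_left cinner_scale_right cinner_Phi_row)
  qed
next
  fix k m
  have "c (k + 1) \<noteq> c' (m + 1)"
    using c c' by (auto simp: bij_betw_def)
  then show "cinner (a k) (b m) = 0"
    by (simp add: a_def b_def cinner_scale_left cinner_scale_right cinner_Phi_row)
qed

lemma det3_twisted_X_eq_0_at: "det3 (\<lambda>i k. X i k * twist_weight (i - j) k) = 0"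
proof -
  have "r l \<in> R" "c l \<in> C" "c' l \<notin> C" for l
    using r c c' by (auto simp: bij_betw_def)
  obtain i where i: "L (r 0) (c 0) = L i (c' j)"
    using surjD[OF bij_is_surj[OF bij_column]] by blast
  then have "i \<notin> R"
    using symbol_in_iff \<open>r 0 \<in> R\<close> \<open>c 0 \<in> C\<close> \<open>c' j \<notin> C\<close> by metis
  then have rows: "r l \<noteq> i" for l
    using \<open>r l \<in> R\<close> by blast
  have "L (r 1) (c 2) = L (r 0) (c (1 + 2))" "L (r 2) (c 1) = L (r 0) (c (2 + 1))"
    using cyclic(1) unfolding cyclic_block_def by blast+
  with i have symbol: "L (r 1) (c 2) = L i (c' j)" "L (r 2) (c 1) = L i (c' j)"
    by simp_all
  define d where "d = Phi i (c' j)"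
  show ?thesis
  proof (rule det3_twisted_X_eq_0)
    show "d \<noteq> (\<lambda>y. 0)"
      using cinner_Phi_self[of i "c' j"] unfolding d_def by auto
    show "cinner (f 0) d = 0"
      unfolding f_def d_def using i rows by (intro cinner_Phi_symbol) auto
    show "cinner (a 1) d = 0"
      unfolding a_def d_def cinner_scale_left using symbol rows by (simp add: cinner_Phi_symbol)
    show "cinner (f 2) d + cinner (a 2) d = 0"
      unfolding f_def a_def d_def using symbol rows
      by (intro cinner_add_eq_0_if_sum_eq_0[OF diagonal_trine(2)[of c 2]]) (simp_all add: cinner_Phi_symbol)
    show "cinner (g j) d = 0"
      unfolding g_def d_def using rows by (simp add: cinner_Phi_column)
    show "cinner (b (j + 2)) d = 0"
      unfolding b_def d_def cinner_scale_left using rows by (simp add: add.assoc cinner_Phi_column)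
    show "cinner (g (j + 1)) d + cinner (b (j + 1)) d = 0"
      unfolding g_def b_def d_def using rows
      by (intro cinner_add_eq_0_if_sum_eq_0[OF diagonal_trine(2)[of c' "j + 1"]]) (simp_all add: add.assoc cinner_Phi_column)
  qed
qed

lemma det3_X_eq_0: "det3 X = 0"
  using sum_det3_twisted[of X] det3_twisted_X_eq_0_at by simp

end

context QLS_half_subsquare
begin

lemma subsquare_order_neq_3: "card R \<noteq> 3"
proof
  assume card_R: "card R = 3"
  then obtain r :: "3 \<Rightarrow> 'n" where r: "bij_betw r UNIV R"
    using finite_same_card_bij[of "UNIV :: 3 set" R] by auto
  obtain c c' where c: "bij_betw c UNIV C" "cyclic_block L r c"
    and c': "bij_betw c' UNIV (- C)" "cyclic_block L r c'"
    using cyclic_block_exists[OF card_R r] by metis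
  interpret cyclic_blocks Phi L R C r c c'
    using card_R r c c' by unfold_locales auto
  show False
    using det3_X_eq_0 det3_X_neq_0 by simp
qed

end

theorem mainTheorem15:
  shows "\<not> (\<exists>(Psi :: 6 \<Rightarrow> 6 \<Rightarrow> 6 \<Rightarrow> complex) Phi L.
           is_QLS Psi \<and> is_QLS Phi \<and> orthogonal_QLS Psi Phi \<and>
           classical_with Psi L \<and> has_subsquare3 L)"
proof
  assume "\<exists>(Psi :: 6 \<Rightarrow> 6 \<Rightarrow> 6 \<Rightarrow> complex) Phi L.
           is_QLS Psi \<and> is_QLS Phi \<and> orthogonal_QLS Psi Phi \<and>
           classical_with Psi L \<and> has_subsquare3 L"
  then obtain Psi Phi :: "6 \<Rightarrow> 6 \<Rightarrow> 6 \<Rightarrow> complex" and L where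
    QLS: "is_QLS Psi" "is_QLS Phi" and orth: "orthogonal_QLS Psi Phi"
    and classical: "classical_with Psi L" and subsquare: "has_subsquare3 L"
    by blast
  from classical obtain e c where latin: "latin_square L" and e: "is_onb UNIV e"
    and Psi: "\<And>i j. Psi i j = (\<lambda>k. c i j * e (L i j) k)"
    unfolding classical_with_def by metis
  from subsquare obtain R C where "card R = 3" "card C = 3" "card {L i j | i j. i \<in> R \<and> j \<in> C} = 3"
    unfolding has_subsquare3_def by blast
  interpret orthogonal_to_classical Psi Phi L e c
    using QLS(1) orth e Psi by unfold_locales
  interpret QLS_half_subsquare Phi L R C
    using QLS(2) latin symbol_class_onb \<open>card R = 3\<close> \<open>card C = 3\<close> \<open>card {L i j | i j. i \<in> R \<and> j \<in> C} = 3\<close>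
    by unfold_locales auto
  show False
    using subsquare_order_neq_3 \<open>card R = 3\<close> by simp
qed

end
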